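(* Let $m \ge 5$ be odd and $n = 3^m-1$. Then the ternary cyclic code $\mathcal{C}_{(1,2,m)}$ has parameters $[n,k,d]$ with $d \ge \frac{3^{(m-1)/2}+13}{2}$ if $m \equiv 1 \pmod 4$ and $d \ge \frac{3^{(m-1)/2}+11}{2}$ if $m \equiv 3 \pmod 4$, and $k = \frac{n}{2}$ if $m \equiv 1 \pmod 4$ and $k = \frac{n+2}{2}$ if $m \equiv 3 \pmod 4$.
   Context: Let $m \ge 2$ be an integer, $n = 3^m-1$, and let $\alpha$ be a primitive element of $\mathbb{F}_{3^m}$. For an integer $0 \le j \le n-1$ with $3$-adic expansion $j = \sum_{t=0}^{m-1} j_t 3^t$, $j_t \in \{0,1,2\}$, let $w_3(j) = \sum_{t=0}^{m-1} j_t$. For distinct $i_1, i_2 \in \{0,1,2,3\}$ let $T_{(i_1,i_2,m)} = \{1 \le j \le n-1 : w_3(j) \equiv i_1 \text{ or } i_2 \pmod 4\}$ and $g_{(i_1,i_2,m)}(x) = \prod_{j \in T_{(i_1,i_2,m)}} (x - \alpha^j) \in \mathbb{F}_3[x]$. $\mathcal{C}_{(i_1,i_2,m)}$ denotes the ternary cyclic code of length $n$ with generator polynomial $g_{(i_1,i_2,m)}(x)$. Parameters $[n,k,d]$ mean length, dimension over $\mathbb{F}_3$, and minimum Hamming distance. *)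

theory Defs
  imports "HOL-Computational_Algebra.Polynomial"
begin

fun w3 :: "nat \<Rightarrow> nat" where
  "w3 j = (if j = 0 then 0 else j mod 3 + w3 (j div 3))"

definition primitive_elem :: "'a::{field,finite} \<Rightarrow> bool" where
  "primitive_elem \<alpha> \<longleftrightarrow> \<alpha> \<noteq> 0 \<and> (\<forall>x. x \<noteq> 0 \<longrightarrow> (\<exists>i::nat. x = \<alpha> ^ i))"

definition Tset :: "nat \<Rightarrow> nat \<Rightarrow> nat \<Rightarrow> nat set" where
  "Tset i1 i2 m = {j. 1 \<le> j \<and> j \<le> 3^m - 2 \<and> (w3 j mod 4 = i1 \<or> w3 j mod 4 = i2)}"

definition gpoly :: "'a::{field,finite} \<Rightarrow> nat \<Rightarrow> nat \<Rightarrow> nat \<Rightarrow> 'a poly" where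
  "gpoly \<alpha> i1 i2 m = (\<Prod>j\<in>Tset i1 i2 m. [:- (\<alpha> ^ j), 1:])"

definition prime_subfield :: "'a::{field,finite} set" where
  "prime_subfield = range (of_nat :: nat \<Rightarrow> 'a)"

text \<open>The ternary cyclic code of length n = 3^m - 1 with generator polynomial g:
  codewords are identified with polynomials c(x) = sum c_i x^i over F_3 of degree < n,
  and the code is the ideal generated by g in F_3[x]/(x^n - 1), i.e. the multiples of g
  of degree < n (g divides x^n - 1).\<close>
definition tcode :: "'a::{field,finite} \<Rightarrow> nat \<Rightarrow> nat \<Rightarrow> nat \<Rightarrow> 'a poly set" where
  "tcode \<alpha> i1 i2 m = {c. (\<forall>i. coeff c i \<in> prime_subfield) \<and> degree c < 3^m - 1
                           \<and> gpoly \<alpha> i1 i2 m dvd c}"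

definition hweight :: "'a::zero poly \<Rightarrow> nat" where
  "hweight c = card {i. coeff c i \<noteq> 0}"

text \<open>Minimum Hamming distance of a linear code = minimum weight of a nonzero codeword.\<close>
definition min_dist :: "'a::zero poly set \<Rightarrow> nat" where
  "min_dist C = Min {hweight c | c. c \<in> C \<and> c \<noteq> 0}"

definition dim3 :: "'a set \<Rightarrow> nat" where
  "dim3 C = (THE k. card C = 3 ^ k)"

end

theory Submission
  imports Defs "HOL-Number_Theory.Residues"
begin

text \<open>
  The coefficientwise cube map fixes exactly the polynomials over \<open>\<bbbF>\<^sub>3\<close>, and it fixes
  \<open>g\<close> because \<open>T\<close> is closed under \<open>j \<mapsto> 3 j mod n\<close>, a cyclic shift of the ternary
  digits. Hence \<open>g q\<close> has coefficients in \<open>\<bbbF>\<^sub>3\<close> iff \<open>q\<close> has, the code has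
  \<open>3 ^ (n - |T|)\<close> elements, and \<open>|T|\<close> follows from counting ternary digit sums modulo 4.

  For the distance write \<open>m = 2 h + 1\<close> and \<open>3 ^ h = 2 H + 1\<close>. If \<open>s\<close> is a unit modulo
  \<open>n\<close>, then \<open>\<alpha> ^ s\<close> again has order \<open>n\<close>, and the BCH bound for \<open>\<alpha> ^ s\<close> gives
  \<open>d > L\<close> as soon as \<open>s, 2 s, \<dots>, L s\<close> all lie in \<open>T\<close> modulo \<open>n\<close>. The multipliers
  \<open>s = 2 H\<^sup>2 + 9 ^ h\<close> (\<open>h\<close> even) and \<open>s = (H - 1) (3 ^ h + 1) + 9 ^ h\<close> (\<open>h\<close> odd)
  give runs of length \<open>H + 6\<close> and \<open>H + 5\<close>: each residue \<open>i s mod n\<close> is written down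
  explicitly and its digit sum computed.
\<close>

hide_const (open) up_ring.coeff

section \<open>Ternary digit sums\<close>

declare w3.simps [simp del]

lemma w3_0 [simp]: "w3 0 = 0"
  by (simp add: w3.simps)

lemma w3_eq: "w3 z = z mod 3 + w3 (z div 3)"
  by (cases "z = 0") (simp_all add: w3.simps)

lemma w3_mult_3_add: "d < 3 \<Longrightarrow> w3 (3 * q + d) = d + w3 q"
  by (subst w3_eq) simp

lemma w3_digit: "d < 3 \<Longrightarrow> w3 d = d"
  using w3_mult_3_add[of d 0] by simp

lemma w3_small: "w3 1 = 1" "w3 2 = 2" "w3 3 = 1" "w3 4 = 2"
  using w3_digit[of 1] w3_digit[of 2] w3_mult_3_add[of 0 1] w3_mult_3_add[of 1 1] by simp_all

lemma w3_mult_power_add: "b < 3 ^ k \<Longrightarrow> w3 (a * 3 ^ k + b) = w3 a + w3 b"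
proof (induction k arbitrary: b)
  case (Suc k)
  have "a * 3 ^ Suc k + b = 3 * (a * 3 ^ k + b div 3) + b mod 3"
    by simp
  also have "w3 \<dots> = b mod 3 + w3 (a * 3 ^ k + b div 3)"
    by (rule w3_mult_3_add) simp
  also have "\<dots> = w3 a + w3 b"
    using Suc by (simp add: w3_eq[of b])
  finally show ?case .
qed simp

lemma w3_complement: "z < 3 ^ k \<Longrightarrow> w3 (3 ^ k - 1 - z) + w3 z = 2 * k"
proof (induction k arbitrary: z)
  case (Suc k)
  have q: "z div 3 < 3 ^ k"
    using Suc.prems by simp
  then have "3 ^ Suc k - 1 - z = 3 * (3 ^ k - 1 - z div 3) + (2 - z mod 3)"
    using div_mult_mod_eq[of z 3] by (simp add: algebra_simps)
  also have "w3 \<dots> = (2 - z mod 3) + w3 (3 ^ k - 1 - z div 3)"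
    by (rule w3_mult_3_add) simp
  finally have "w3 (3 ^ Suc k - 1 - z) = (2 - z mod 3) + w3 (3 ^ k - 1 - z div 3)" .
  moreover have "z mod 3 < 3"
    by simp
  ultimately show ?case
    using Suc.IH[OF q] w3_eq[of z] unfolding mult_Suc_right by linarith
qed simp

lemma w3_mod_2: "w3 z mod 2 = z mod 2"
proof (induction z rule: less_induct)
  case (less z)
  show ?case
  proof (cases "z = 0")
    case False
    then have "w3 (z div 3) mod 2 = (z div 3) mod 2"
      by (intro less.IH) simp
    then have "w3 z mod 2 = (z mod 3 + z div 3) mod 2"
      using w3_eq[of z] by (metis mod_add_right_eq)
    also have "\<dots> = (z mod 3 + z div 3 + z div 3 * 2) mod 2"
      by (rule mod_mult_self1[symmetric])
    also have "z mod 3 + z div 3 + z div 3 * 2 = z"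
      using div_mult_mod_eq[of z 3] by linarith
    finally show ?thesis .
  qed simp
qed

section \<open>Finite fields of order \<open>3 ^ m\<close>\<close>

lemma CHAR_eq_3:
  assumes "card (UNIV :: 'a::{field,finite} set) = 3 ^ m" and "m > 0"
  shows "CHAR('a) = 3"
proof -
  have "prime CHAR('a)"
    by (intro prime_CHAR_semidom finite_imp_CHAR_pos) simp
  moreover have "CHAR('a) dvd 3 ^ m"
    using CHAR_dvd_CARD[where 'a = 'a] assms(1) by simp
  ultimately have "CHAR('a) dvd 3"
    by (rule prime_dvd_power)
  with \<open>prime CHAR('a)\<close> show ?thesis
    by (intro primes_dvd_imp_eq) simp_all
qed

context
  assumes char3: "CHAR('a::{field,finite}) = 3"
begin

lemma three_eq_zero: "(3::'a) = 0"
  using of_nat_CHAR[where 'a = 'a] char3 by simp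

lemma prime_subfield_eq_image: "(prime_subfield :: 'a set) = of_nat ` {..<3}"
proof -
  have "(of_nat k :: 'a) = of_nat (k mod 3)" for k
  proof -
    have "(of_nat k :: 'a) = of_nat (k mod 3) + 3 * of_nat (k div 3)"
      by (metis mod_mult_div_eq of_nat_add of_nat_mult of_nat_numeral)
    then show ?thesis
      by (simp add: three_eq_zero)
  qed
  then show ?thesis
    unfolding prime_subfield_def by (auto intro!: image_eqI[of _ _ "_ mod 3"])
qed

lemma prime_subfield_eq: "(prime_subfield :: 'a set) = {0, 1, 2}"
proof -
  have "{..<3} = {0, 1, 2::nat}"
    by auto
  then show ?thesis
    by (simp add: prime_subfield_eq_image)
qed

lemma card_prime_subfield: "card (prime_subfield :: 'a set) = 3"
proof -
  have neq: "(of_nat a :: 'a) \<noteq> of_nat b" if "a < b" "b < 3" for a b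
  proof
    assume "(of_nat a :: 'a) = of_nat b"
    then have "3 dvd b - a"
      using of_nat_eq_iff_char_dvd[where 'a = 'a, OF \<open>a < b\<close>] char3 by simp
    then show False
      using that by (auto dest: dvd_imp_le)
  qed
  have "inj_on (of_nat :: nat \<Rightarrow> 'a) {..<3}"
    by (rule inj_onI) (metis lessThan_iff linorder_neqE_nat neq)
  then show ?thesis
    by (simp add: prime_subfield_eq_image card_image)
qed

lemma cube_eq_self_iff: "(x::'a) ^ 3 = x \<longleftrightarrow> x \<in> prime_subfield"
proof -
  have "x * (x - 1) * (x - 2) = x ^ 3 - x + 3 * (x - x ^ 2)"
    by (simp add: algebra_simps power2_eq_square power3_eq_cube)
  then have "x ^ 3 = x \<longleftrightarrow> x * (x - 1) * (x - 2) = 0"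
    by (simp add: three_eq_zero)
  then show ?thesis
    by (simp add: prime_subfield_eq)
qed

end

lemma power_card_minus_1_eq_1:
  fixes x :: "'a::{field,finite}"
  assumes "x \<noteq> 0"
  shows "x ^ (card (UNIV :: 'a set) - 1) = 1"
proof -
  define U where "U = (UNIV :: 'a set) - {0}"
  have "(\<Prod>y\<in>U. x * y) = (\<Prod>y\<in>U. y)"
    by (rule prod.reindex_bij_witness[of _ "\<lambda>y. y / x" "\<lambda>y. x * y"]) (use assms in \<open>auto simp: U_def\<close>)
  moreover have "(\<Prod>y\<in>U. x * y) = x ^ card U * (\<Prod>y\<in>U. y)"
    by (simp add: prod.distrib)
  moreover have "(\<Prod>y\<in>U. y) \<noteq> 0"
    by (simp add: U_def)
  ultimately show ?thesis
    by (simp add: U_def card_Diff_singleton)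
qed

lemma card_UNIV_field_minus_1_pos: "card (UNIV :: 'a::{field,finite} set) - 1 > 0"
  using card_mono[of UNIV "{0::'a, 1}"] by simp

lemma power_mod_card_minus_1:
  fixes x :: "'a::{field,finite}"
  assumes "x \<noteq> 0"
  shows "x ^ k = x ^ (k mod (card (UNIV :: 'a set) - 1))"
proof -
  let ?q = "card (UNIV :: 'a set) - 1"
  have "x ^ k = (x ^ ?q) ^ (k div ?q) * x ^ (k mod ?q)"
    by (metis div_mult_mod_eq power_add power_mult mult.commute)
  also have "\<dots> = x ^ (k mod ?q)"
    by (simp only: power_card_minus_1_eq_1[OF assms] power_one mult_1)
  finally show ?thesis .
qed

lemma primitive_elem_power_eq_iff:
  fixes \<alpha> :: "'a::{field,finite}"
  assumes prim: "primitive_elem \<alpha>"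
  shows "\<alpha> ^ a = \<alpha> ^ b \<longleftrightarrow> a mod (card (UNIV :: 'a set) - 1) = b mod (card (UNIV :: 'a set) - 1)"
proof -
  let ?q = "card (UNIV :: 'a set) - 1"
  have \<alpha>: "\<alpha> \<noteq> 0"
    using prim by (simp add: primitive_elem_def)
  have "(\<lambda>k. \<alpha> ^ k) ` {..<?q} = UNIV - {0}"
  proof (intro subset_antisym subsetI)
    fix x :: 'a
    assume "x \<in> UNIV - {0}"
    then obtain i where "x = \<alpha> ^ i"
      using prim by (auto simp: primitive_elem_def)
    then have "x = \<alpha> ^ (i mod ?q)" and "i mod ?q < ?q"
      using power_mod_card_minus_1[OF \<alpha>] card_UNIV_field_minus_1_pos[where 'a = 'a] by simp_all
    then show "x \<in> (\<lambda>k. \<alpha> ^ k) ` {..<?q}"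
      by blast
  qed (use \<alpha> in auto)
  then have "inj_on (\<lambda>k. \<alpha> ^ k) {..<?q}"
    by (intro eq_card_imp_inj_on) (simp_all add: card_Diff_singleton)
  moreover have "a mod ?q < ?q" "b mod ?q < ?q"
    using card_UNIV_field_minus_1_pos[where 'a = 'a] by simp_all
  ultimately show ?thesis
    using power_mod_card_minus_1[OF \<alpha>, of a] power_mod_card_minus_1[OF \<alpha>, of b]
    by (metis inj_on_eq_iff lessThan_iff)
qed

definition cube_coeffs :: "'a::comm_semiring_1 poly \<Rightarrow> 'a poly" where
  "cube_coeffs p = map_poly (\<lambda>x. x ^ 3) p"

lemma coeff_cube_coeffs: "coeff (cube_coeffs p) i = coeff p i ^ 3"
  by (simp add: cube_coeffs_def coeff_map_poly)

lemma cube_coeffs_linear: "cube_coeffs [:- c, 1:] = [:- (c ^ 3), 1 :: 'a::comm_ring_1:]"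
  by (simp add: cube_coeffs_def map_poly_pCons)

lemma cube_coeffs_1: "cube_coeffs 1 = 1"
  by (simp add: cube_coeffs_def map_poly_1)

lemma cube_coeffs_mult:
  assumes "CHAR('a::comm_semiring_1) = 3"
  shows "cube_coeffs (p * q) = cube_coeffs p * cube_coeffs (q :: 'a poly)"
  by (rule poly_eqI)
     (simp add: coeff_cube_coeffs coeff_mult power_mult_distrib freshmans_dream_sum assms)

lemma cube_coeffs_prod:
  assumes "CHAR('a::comm_semiring_1) = 3"
  shows "cube_coeffs (\<Prod>j\<in>A. f j) = (\<Prod>j\<in>A. cube_coeffs (f j :: 'a poly))"
  by (induction A rule: infinite_finite_induct)
     (simp_all add: cube_coeffs_mult[OF assms] cube_coeffs_1)

lemma cube_coeffs_eq_self_iff: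
  assumes "CHAR('a::{field,finite}) = 3"
  shows "cube_coeffs (p :: 'a poly) = p \<longleftrightarrow> (\<forall>i. coeff p i \<in> prime_subfield)"
  using cube_eq_self_iff[OF assms] by (auto simp: poly_eq_iff coeff_cube_coeffs)

section \<open>Multiplication by 3 permutes \<open>T\<close>\<close>

lemma inj_on_mult_mod:
  fixes s v k n :: nat
  assumes "s * v = 1 + k * n"
  shows "inj_on (\<lambda>x. (s * x) mod n) {..<n}"
proof (rule inj_onI)
  fix x y
  assume x: "x \<in> {..<n}" and y: "y \<in> {..<n}" and eq: "(s * x) mod n = (s * y) mod n"
  have cancel: "(v * (s * z)) mod n = z mod n" for z
  proof -
    have "v * (s * z) = z + (k * z) * n"
      by (metis assms mult.assoc mult.commute mult.left_commute distrib_left nat_mult_1_right)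
    then show ?thesis
      by simp
  qed
  have "x mod n = (v * (s * x)) mod n"
    by (rule cancel[symmetric])
  also have "\<dots> = (v * (s * y)) mod n"
    using eq by (metis mod_mult_right_eq)
  also have "\<dots> = y mod n"
    by (rule cancel)
  finally show "x = y"
    using x y by simp
qed

lemma mult_3_mod_eq_rotate:
  fixes j k :: nat
  assumes "j < 3 ^ Suc k - 1"
  shows "(3 * j) mod (3 ^ Suc k - 1) = 3 * (j mod 3 ^ k) + j div 3 ^ k"
proof -
  define r d where "r = j mod 3 ^ k" and "d = j div 3 ^ k"
  have j: "j = d * 3 ^ k + r" and r: "r < 3 ^ k"
    by (simp_all add: r_def d_def div_mult_mod_eq)
  have d: "d < 3"
    using assms by (simp add: d_def less_mult_imp_div_less)
  have "3 * r + d < 3 ^ Suc k - 1"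
  proof (rule ccontr)
    assume "\<not> ?thesis"
    then have "r = 3 ^ k - 1" "d = 2"
      using r d by auto
    then show False
      using assms j by simp
  qed
  moreover have "3 * j = d * (3 ^ Suc k - 1) + (3 * r + d)"
  proof -
    have "d * (3 ^ Suc k - 1) + d = 3 * (d * 3 ^ k)"
      by (simp add: diff_mult_distrib2)
    then show ?thesis
      using j by linarith
  qed
  ultimately show ?thesis
    by (simp add: r_def d_def)
qed

lemma w3_rotate:
  assumes "j < 3 ^ Suc k"
  shows "w3 (3 * (j mod 3 ^ k) + j div 3 ^ k) = w3 j"
proof -
  have d: "j div 3 ^ k < 3"
    using assms by (simp add: less_mult_imp_div_less)
  have "w3 j = w3 (j div 3 ^ k * 3 ^ k + j mod 3 ^ k)"
    by (simp only: div_mult_mod_eq)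
  also have "\<dots> = w3 (j div 3 ^ k) + w3 (j mod 3 ^ k)"
    by (rule w3_mult_power_add) simp
  finally show ?thesis
    using d by (simp add: w3_mult_3_add w3_digit)
qed

lemma finite_Tset: "finite (Tset i1 i2 m)"
  by (rule finite_subset[of _ "{..<3 ^ m}"]) (auto simp: Tset_def)

lemma inj_on_mult_3_mod: "m > 0 \<Longrightarrow> inj_on (\<lambda>j::nat. (3 * j) mod (3 ^ m - 1)) {..<3 ^ m - 1}"
  by (rule inj_on_mult_mod[where v = "3 ^ (m - 1)" and k = 1]) (cases m; simp)

lemma image_mult_3_mod_Tset:
  assumes "m > 0"
  shows "(\<lambda>j. (3 * j) mod (3 ^ m - 1)) ` Tset i1 i2 m = Tset i1 i2 m"
proof (rule endo_inj_surj)
  show "finite (Tset i1 i2 m)"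
    by (rule finite_Tset)
  have "Tset i1 i2 m \<subseteq> {..<3 ^ m - 1}"
    by (auto simp: Tset_def)
  with inj_on_mult_3_mod[OF assms] show inj: "inj_on (\<lambda>j. (3 * j) mod (3 ^ m - 1)) (Tset i1 i2 m)"
    by (rule inj_on_subset)
  obtain k where m: "m = Suc k"
    using assms gr0_implies_Suc by blast
  show "(\<lambda>j. (3 * j) mod (3 ^ m - 1)) ` Tset i1 i2 m \<subseteq> Tset i1 i2 m"
  proof clarify
    fix j
    assume j: "j \<in> Tset i1 i2 m"
    then have j_less: "j < 3 ^ m - 1" and "0 < j"
      by (auto simp: Tset_def)
    have "(1::nat) < 3 ^ m"
      using assms by (intro one_less_power) simp_all
    then have "(3 * j) mod (3 ^ m - 1) \<noteq> 0"
      using inj_onD[OF inj_on_mult_3_mod[OF assms], of j 0] j_less \<open>0 < j\<close> by auto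
    moreover have "w3 ((3 * j) mod (3 ^ m - 1)) = w3 j"
      unfolding m mult_3_mod_eq_rotate[OF j_less[unfolded m]]
      by (rule w3_rotate) (use j_less m in simp)
    moreover have "(3 * j) mod (3 ^ m - 1) < 3 ^ m - 1"
      using j_less by simp
    ultimately show "(3 * j) mod (3 ^ m - 1) \<in> Tset i1 i2 m"
      using j by (auto simp: Tset_def)
  qed
qed

lemma gpoly_nonzero: "gpoly \<alpha> i1 i2 m \<noteq> 0"
  by (simp add: gpoly_def finite_Tset)

lemma degree_gpoly: "degree (gpoly \<alpha> i1 i2 m) = card (Tset i1 i2 m)"
  by (simp add: gpoly_def degree_prod_eq_sum_degree finite_Tset)

lemma poly_gpoly_eq_0: "j \<in> Tset i1 i2 m \<Longrightarrow> poly (gpoly \<alpha> i1 i2 m) (\<alpha> ^ j) = 0"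
  by (simp add: gpoly_def poly_prod finite_Tset) blast

lemma coeff_Poly_map_upt: "coeff (Poly (map f [0..<k])) i = (if i < k then f i else 0)"
  by (simp add: nth_default_def)

lemma card_polys_degree_less:
  fixes F :: "'a::zero set"
  assumes F: "finite F" "0 \<in> F" and k: "k > 0"
  shows "card {p :: 'a poly. (\<forall>i. coeff p i \<in> F) \<and> degree p < k} = card F ^ k"
proof -
  let ?P = "{p :: 'a poly. (\<forall>i. coeff p i \<in> F) \<and> degree p < k}"
  have "bij_betw (\<lambda>p. restrict (coeff p) {..<k}) ?P ({..<k} \<rightarrow>\<^sub>E F)"
  proof (rule bij_betw_byWitness[where f' = "\<lambda>f. Poly (map f [0..<k])"])
    show "\<forall>p\<in>?P. Poly (map (restrict (coeff p) {..<k}) [0..<k]) = p"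
      by (simp add: poly_eq_iff coeff_Poly_map_upt coeff_eq_0 del: coeff_Poly_eq)
    show "\<forall>f\<in>{..<k} \<rightarrow>\<^sub>E F. restrict (coeff (Poly (map f [0..<k]))) {..<k} = f"
      by (auto simp: coeff_Poly_map_upt PiE_def extensional_def simp del: coeff_Poly_eq)
    show "(\<lambda>p. restrict (coeff p) {..<k}) ` ?P \<subseteq> {..<k} \<rightarrow>\<^sub>E F"
      by (intro image_subsetI) (simp add: restrict_PiE_iff)
    have "degree (Poly (map f [0..<k])) < k" for f :: "nat \<Rightarrow> 'a"
    proof -
      have "degree (Poly (map f [0..<k])) \<le> k - 1"
        by (rule degree_le) (auto simp: coeff_Poly_map_upt simp del: coeff_Poly_eq)
      then show ?thesis
        using k by linarith
    qed
    moreover have "coeff (Poly (map f [0..<k])) i \<in> F" if "f \<in> {..<k} \<rightarrow>\<^sub>E F" for f i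
      using that F by (auto simp: coeff_Poly_map_upt simp del: coeff_Poly_eq)
    ultimately show "(\<lambda>f. Poly (map f [0..<k])) ` ({..<k} \<rightarrow>\<^sub>E F) \<subseteq> ?P"
      by (auto simp del: coeff_Poly_eq)
  qed
  then show ?thesis
    using F by (simp add: bij_betw_same_card card_PiE)
qed

lemma card_Tset_less:
  assumes "m > 0"
  shows "card (Tset i1 i2 m) < 3 ^ m - 1"
proof -
  have "card (Tset i1 i2 m) \<le> card {1..3 ^ m - 2::nat}"
    by (rule card_mono) (auto simp: Tset_def)
  moreover have "(1::nat) < 3 ^ m"
    using assms by (intro one_less_power) simp_all
  ultimately show ?thesis
    by simp
qed

definition digit_sum_count :: "nat \<Rightarrow> nat \<Rightarrow> int" where
  "digit_sum_count m r = (\<Sum>j<3 ^ m. if w3 j mod 4 = r then 1 else 0)"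

text \<open>The real part of \<open>\<i> ^ k\<close>.\<close>

definition re_i_power :: "nat \<Rightarrow> int" where
  "re_i_power k = (if k mod 4 = 0 then 1 else if k mod 4 = 2 then -1 else 0)"

lemma sum_lessThan_3_mult:
  "(\<Sum>j<3 * (M::nat). f j) = (\<Sum>q<M. f (3 * q) + f (3 * q + 1) + f (3 * q + 2) :: 'a::comm_monoid_add)"
proof (induction M)
  case (Suc M)
  have "{..<3 * Suc M} = insert (3 * M + 2) (insert (3 * M + 1) (insert (3 * M) {..<3 * M}))"
    by auto
  then show ?case
    using Suc by (simp add: add_ac)
qed simp

lemma less_4_cases: "(n::nat) < 4 \<Longrightarrow> n = 0 \<or> n = 1 \<or> n = 2 \<or> n = 3"
  by arith

lemma add_mod_4_eq_iff:
  fixes d r w :: nat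
  assumes "r < 4" "d < 4"
  shows "(d + w) mod 4 = r \<longleftrightarrow> w mod 4 = (r + 4 - d) mod 4"
proof -
  define v where "v = w mod 4"
  have "(d + w) mod 4 = (d + v) mod 4"
    by (simp add: v_def mod_add_right_eq)
  moreover have "v < 4"
    by (simp add: v_def)
  ultimately show ?thesis
    using less_4_cases[OF assms(1)] less_4_cases[OF assms(2)] less_4_cases[OF \<open>v < 4\<close>]
    unfolding v_def[symmetric] by (elim disjE) simp_all
qed

lemma digit_sum_count_Suc:
  assumes "r < 4"
  shows "digit_sum_count (Suc m) r =
    digit_sum_count m r + digit_sum_count m ((r + 3) mod 4) + digit_sum_count m ((r + 2) mod 4)"
proof -
  let ?ind = "\<lambda>b. if b then 1 else (0::int)"
  have shift: "?ind (w3 (3 * q + d) mod 4 = r) = ?ind (w3 q mod 4 = e)"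
    if "d < 3" "e = (r + 4 - d) mod 4" for q d e
    using that assms by (simp add: w3_mult_3_add add_mod_4_eq_iff)
  have digits: "?ind (w3 (3 * q + 0) mod 4 = r) = ?ind (w3 q mod 4 = r)"
    "?ind (w3 (3 * q + 1) mod 4 = r) = ?ind (w3 q mod 4 = (r + 3) mod 4)"
    "?ind (w3 (3 * q + 2) mod 4 = r) = ?ind (w3 q mod 4 = (r + 2) mod 4)" for q
    by (rule shift, simp, use assms in \<open>simp add: add.commute\<close>)+
  have "digit_sum_count (Suc m) r = (\<Sum>q<3 ^ m. ?ind (w3 (3 * q + 0) mod 4 = r)
      + ?ind (w3 (3 * q + 1) mod 4 = r) + ?ind (w3 (3 * q + 2) mod 4 = r))"
    unfolding digit_sum_count_def power_Suc sum_lessThan_3_mult by simp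
  also have "\<dots> = (\<Sum>q<3 ^ m. ?ind (w3 q mod 4 = r)
      + ?ind (w3 q mod 4 = (r + 3) mod 4) + ?ind (w3 q mod 4 = (r + 2) mod 4))"
    by (simp only: digits)
  finally show ?thesis
    by (simp add: digit_sum_count_def sum.distrib)
qed

lemma re_i_power_add_diff: "s \<le> k \<Longrightarrow> re_i_power (m + k - s) = re_i_power (m mod 4 + k - s)"
proof -
  assume "s \<le> k"
  then have "(m + k - s) mod 4 = (m mod 4 + k - s) mod 4"
    by (metis Nat.add_diff_assoc mod_add_left_eq)
  then show ?thesis
    by (simp add: re_i_power_def)
qed

text \<open>The roots of unity filter applied to \<open>(1 + x + x\<^sup>2) ^ m\<close> at the fourth roots of unity.\<close>
lemma digit_sum_count_eq:
  "r < 4 \<Longrightarrow> 4 * digit_sum_count m r = 3 ^ m + (-1) ^ r + 2 * re_i_power (m + 4 - r)"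
proof (induction m arbitrary: r)
  case 0
  from less_4_cases[OF 0] show ?case
    by (elim disjE) (simp_all add: digit_sum_count_def re_i_power_def)
next
  case (Suc m)
  have "m mod 4 < 4" and "Suc m + 4 - r = m + 5 - r"
    by simp_all
  with less_4_cases[OF Suc.prems] less_4_cases[OF this(1)] show ?case
    using Suc.IH[of r] Suc.IH[of "(r + 3) mod 4"] Suc.IH[of "(r + 2) mod 4"] Suc.prems
      re_i_power_add_diff[of r 4 m] re_i_power_add_diff[of "(r + 3) mod 4" 4 m]
      re_i_power_add_diff[of "(r + 2) mod 4" 4 m] re_i_power_add_diff[of r 5 m]
    unfolding digit_sum_count_Suc[OF Suc.prems] \<open>Suc m + 4 - r = m + 5 - r\<close>
    by (elim disjE) (simp_all add: re_i_power_def)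
qed

lemma card_digit_sum_mod_4_1_2:
  assumes "odd m"
  shows "2 * int (card {j \<in> {..<3 ^ m}. w3 j mod 4 = 1 \<or> w3 j mod 4 = 2})
    = 3 ^ m + (if m mod 4 = 1 then 1 else -1)"
proof -
  let ?P = "\<lambda>j. w3 j mod 4 = 1 \<or> w3 j mod 4 = 2"
  have "int (card {j \<in> {..<3 ^ m}. ?P j}) = (\<Sum>j<3 ^ m. if ?P j then 1 else 0)"
    by (simp add: sum.inter_filter[symmetric])
  also have "\<dots> = digit_sum_count m 1 + digit_sum_count m 2"
    unfolding digit_sum_count_def sum.distrib[symmetric] by (rule sum.cong) auto
  finally have count: "int (card {j \<in> {..<3 ^ m}. ?P j}) = digit_sum_count m 1 + digit_sum_count m 2" .
  have "m mod 4 = 1 \<or> m mod 4 = 3"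
    using assms by presburger
  then have "re_i_power (m + 3) = (if m mod 4 = 1 then 1 else -1)" and "re_i_power (m + 2) = 0"
    using mod_add_left_eq[of m 4 3] mod_add_left_eq[of m 4 2] by (auto simp: re_i_power_def)
  moreover have "4 * digit_sum_count m 1 = 3 ^ m - 1 + 2 * re_i_power (m + 3)"
    using digit_sum_count_eq[of 1 m] by (simp add: add.commute)
  moreover have "4 * digit_sum_count m 2 = 3 ^ m + 1 + 2 * re_i_power (m + 2)"
    using digit_sum_count_eq[of 2 m] by (simp add: add.commute)
  ultimately show ?thesis
    using count by auto
qed

lemma Tset_1_2_eq: "Tset 1 2 m = {j \<in> {..<3 ^ m}. w3 j mod 4 = 1 \<or> w3 j mod 4 = 2} - {3 ^ m - 1}"
  by (auto simp: Tset_def Suc_le_eq intro!: gr0I)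

lemma card_Tset_1_2:
  assumes "odd m"
  shows "2 * card (Tset 1 2 m) + (if m mod 4 = 1 then 1 else 3) = 3 ^ m"
proof -
  let ?S = "{j \<in> {..<3 ^ m}. w3 j mod 4 = 1 \<or> w3 j mod 4 = 2}"
  have "w3 (3 ^ m - 1) = 2 * m"
    using w3_complement[of 0 m] by simp
  moreover have "2 * m mod 4 = 2"
    using assms by presburger
  ultimately have top: "3 ^ m - 1 \<in> ?S"
    by simp
  then have "card (Tset 1 2 m) = card ?S - 1"
    unfolding Tset_1_2_eq by (simp add: card_Diff_singleton)
  moreover have "card ?S > 0"
    using top by (intro card_gt_0_iff[THEN iffD2] conjI) (blast, simp)
  ultimately have "int (2 * card (Tset 1 2 m) + (if m mod 4 = 1 then 1 else 3)) = int (3 ^ m)"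
    using card_digit_sum_mod_4_1_2[OF assms] by auto
  then show ?thesis
    by (simp only: of_nat_eq_iff)
qed

section \<open>The BCH bound\<close>

lemma poly_eq_sum_lessThan:
  fixes p :: "'a::comm_semiring_1 poly"
  assumes "degree p < L"
  shows "poly p y = (\<Sum>j<L. coeff p j * y ^ j)"
proof -
  have "poly p y = (\<Sum>j\<le>degree p. coeff p j * y ^ j)"
    by (rule poly_altdef)
  also have "\<dots> = (\<Sum>j<L. coeff p j * y ^ j)"
    by (rule sum.mono_neutral_left) (use assms in \<open>auto simp: coeff_eq_0\<close>)
  finally show ?thesis .
qed

lemma sum_coeff_mult_poly_powers:
  fixes \<beta> :: "'a::comm_ring_1"
  assumes "degree c < n" and "degree P < L"
  shows "(\<Sum>k<n. coeff c k * \<beta> ^ k * poly P (\<beta> ^ k)) = (\<Sum>j<L. coeff P j * poly c (\<beta> ^ Suc j))"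
proof -
  have "\<beta> ^ k * (\<beta> ^ k) ^ j = (\<beta> ^ Suc j) ^ k" for k j
    by (metis power_Suc power_mult mult.commute)
  then have "(\<Sum>k<n. coeff c k * \<beta> ^ k * poly P (\<beta> ^ k))
      = (\<Sum>k<n. \<Sum>j<L. coeff P j * (coeff c k * (\<beta> ^ Suc j) ^ k))"
    by (simp add: poly_eq_sum_lessThan[OF assms(2)] sum_distrib_left mult_ac)
  also have "\<dots> = (\<Sum>j<L. coeff P j * poly c (\<beta> ^ Suc j))"
    by (subst sum.swap) (simp add: poly_eq_sum_lessThan[OF assms(1)] sum_distrib_left)
  finally show ?thesis .
qed

lemma poly_prod_linear_powers_eq_0_iff:
  fixes \<beta> :: "'a::field"
  assumes inj: "inj_on (\<lambda>k. \<beta> ^ k) {..<n}" and A: "finite A" "A \<subseteq> {..<n}" and "j < n"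
  shows "poly (\<Prod>k\<in>A. [:- (\<beta> ^ k), 1:]) (\<beta> ^ j) = 0 \<longleftrightarrow> j \<in> A"
proof -
  have "\<beta> ^ j = \<beta> ^ k \<longleftrightarrow> j = k" if "k \<in> A" for k
    using inj A that \<open>j < n\<close> by (auto dest: inj_onD)
  then show ?thesis
    using A by (auto simp: poly_prod)
qed

text \<open>If \<open>c\<close> had at most \<open>L\<close> nonzero coefficients, then for the polynomial \<open>P\<close> of degree
  \<open>< L\<close> vanishing at all but one of the corresponding powers of \<open>\<beta>\<close>, the left-hand side of
  \<open>sum_coeff_mult_poly_powers\<close> would be nonzero while the roots of \<open>c\<close> make the right-hand
  side vanish.\<close>
lemma bch_bound:
  fixes \<beta> :: "'a::field" and c :: "'a poly"
  assumes inj: "inj_on (\<lambda>k. \<beta> ^ k) {..<n}" and "\<beta> \<noteq> 0"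
    and deg: "degree c < n" and "c \<noteq> 0"
    and roots: "\<And>i. 1 \<le> i \<Longrightarrow> i \<le> L \<Longrightarrow> poly c (\<beta> ^ i) = 0"
  shows "L < hweight c"
proof (rule ccontr)
  define S where "S = {k. coeff c k \<noteq> 0}"
  assume "\<not> L < hweight c"
  then have card_S: "card S \<le> L"
    by (simp add: hweight_def S_def)
  have S: "S \<subseteq> {..<n}"
    using deg by (auto simp: S_def intro: le_less_trans le_degree)
  then have "finite S"
    using finite_subset by blast
  obtain k0 where k0: "k0 \<in> S"
    using \<open>c \<noteq> 0\<close> by (auto simp: S_def poly_eq_iff)
  define P where "P = (\<Prod>k\<in>S - {k0}. [:- (\<beta> ^ k), 1:])"
  have P_eq_0: "poly P (\<beta> ^ k) = 0 \<longleftrightarrow> k \<in> S - {k0}" if "k < n" for k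
    unfolding P_def using \<open>finite S\<close> S that by (intro poly_prod_linear_powers_eq_0_iff[OF inj]) auto
  have "degree P = card S - 1"
    using \<open>finite S\<close> k0 by (simp add: P_def degree_prod_eq_sum_degree)
  moreover have "card S > 0"
    using \<open>finite S\<close> k0 card_gt_0_iff by blast
  ultimately have "degree P < L"
    using card_S by linarith
  have "(\<Sum>k<n. coeff c k * \<beta> ^ k * poly P (\<beta> ^ k)) = (\<Sum>k\<in>{k0}. coeff c k * \<beta> ^ k * poly P (\<beta> ^ k))"
  proof (rule sum.mono_neutral_right)
    show "\<forall>k\<in>{..<n} - {k0}. coeff c k * \<beta> ^ k * poly P (\<beta> ^ k) = 0"
      using P_eq_0 by (auto simp: S_def)
  qed (use k0 S in auto)
  also have "\<dots> = coeff c k0 * \<beta> ^ k0 * poly P (\<beta> ^ k0)"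
    by simp
  also have "\<dots> \<noteq> 0"
    using k0 S P_eq_0[of k0] \<open>\<beta> \<noteq> 0\<close> by (auto simp: S_def)
  finally have "(\<Sum>k<n. coeff c k * \<beta> ^ k * poly P (\<beta> ^ k)) \<noteq> 0" .
  moreover have "(\<Sum>j<L. coeff P j * poly c (\<beta> ^ Suc j)) = 0"
    by (rule sum.neutral) (simp add: roots del: power_Suc)
  ultimately show False
    using sum_coeff_mult_poly_powers[OF deg \<open>degree P < L\<close>, of \<beta>] by simp
qed

lemma less_min_dist:
  assumes "finite C" and "c \<in> C" and "c \<noteq> 0"
    and "\<And>c. c \<in> C \<Longrightarrow> c \<noteq> 0 \<Longrightarrow> L < hweight c"
  shows "L < min_dist C"
  unfolding min_dist_def using assms by (subst Min_gr_iff) auto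

section \<open>Long runs of multiples in \<open>T\<close>\<close>

lemma pow_3_mod_4: "(3::nat) ^ h mod 4 = (if even h then 1 else 3)"
proof (induction h)
  case (Suc h)
  have "(3::nat) ^ Suc h mod 4 = 3 * (3 ^ h mod 4) mod 4"
    by (simp add: mod_mult_right_eq)
  with Suc show ?case
    by auto
qed simp

context
  fixes h H a :: nat
  assumes a: "a = 3 ^ h" and aH: "a = 2 * H + 1" and h: "h \<ge> 2"
begin

lemma a_ge_9: "a \<ge> 9"
  using power_increasing[of 2 h "3::nat"] h by (simp add: a)

lemma even_H_iff: "even H \<longleftrightarrow> even h"
  using pow_3_mod_4[of h] by (simp add: flip: a) (use aH in presburger)

lemma a_sq: "a * a = 3 ^ (2 * h)"
  by (simp add: a mult_2 power_add)

lemma three_pow_eq: "3 ^ (2 * h + 1) - 1 = 2 * (H * (1 + a) + a * a)"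
proof -
  have "(3::nat) ^ (2 * h + 1) = 3 * (a * a)"
    by (simp add: a_sq)
  then show ?thesis
    using aH by (simp add: algebra_simps)
qed

lemma w3_mult_a_add: "u < a \<Longrightarrow> w3 (v * a + u) = w3 v + w3 u"
  using w3_mult_power_add[of u h v] by (simp add: a)

lemma w3_a_minus_1_minus: "z < a \<Longrightarrow> w3 (a - 1 - z) + w3 z = 2 * h"
  using w3_complement[of z h] by (simp add: a)

lemma w3_a_sq_add: "y < a * a \<Longrightarrow> w3 (a * a + y) = 1 + w3 y"
  using w3_mult_power_add[of y "2 * h" 1] by (simp add: a_sq w3_digit)

text \<open>
  Here \<open>n = 3 ^ (2 h + 1) - 1 = 2 N\<close> with \<open>N = H (1 + a) + a\<^sup>2\<close>. For both multipliers
  \<open>s + z\<^sub>1 = N\<close> for a small \<open>z\<^sub>1\<close>, so \<open>i s \<equiv> -i z\<^sub>1\<close> for even \<open>i\<close> and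
  \<open>i s \<equiv> N - i z\<^sub>1\<close> for odd \<open>i\<close>.
\<close>

lemma mod_in_Tset_even:
  assumes eq: "i * s + z = i * (H * (1 + a) + a * a)" and "even i"
    and z: "0 < z" "z < 3 ^ (2 * h + 1) - 1" and "w3 z mod 4 = 0"
  shows "(i * s) mod (3 ^ (2 * h + 1) - 1) \<in> Tset 1 2 (2 * h + 1)"
proof -
  define n :: nat where "n = 3 ^ (2 * h + 1) - 1"
  define N where "N = H * (1 + a) + a * a"
  have n: "n = 2 * N"
    unfolding n_def N_def by (rule three_pow_eq)
  obtain k where i: "i = 2 * k"
    using \<open>even i\<close> by blast
  then have "i * s + z = k * n"
    using eq unfolding n N_def[symmetric] by (simp add: algebra_simps)
  moreover have "k \<noteq> 0"
  proof
    assume "k = 0"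
    with eq i z(1) show False
      by simp
  qed
  ultimately have "i * s = (k - 1) * n + (n - z)"
    using z(2) unfolding n_def[symmetric] by (cases k) (auto simp: algebra_simps)
  then have "(i * s) mod n = (n - z) mod n"
    by (simp only: mod_mult_self3)
  also have "\<dots> = n - z"
    using z unfolding n_def[symmetric] by simp
  finally have "(i * s) mod n = n - z" .
  moreover have "w3 (n - z) + w3 z = 4 * h + 2"
    using w3_complement[of z "2 * h + 1"] z by (simp add: n_def)
  then have "w3 (n - z) mod 4 = 2"
    using \<open>w3 z mod 4 = 0\<close> by presburger
  moreover have "1 \<le> n - z" and "n - z \<le> 3 ^ (2 * h + 1) - 2"
    using z by (simp_all add: n_def)
  ultimately show ?thesis
    unfolding n_def[symmetric] by (simp add: Tset_def)
qed

lemma mod_in_Tset_odd: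
  assumes eq: "i * s + z = i * (H * (1 + a) + a * a)" and "odd i"
    and x: "x + z = H * (1 + a) + a * a" "0 < x" and "w3 x mod 4 = 1"
  shows "(i * s) mod (3 ^ (2 * h + 1) - 1) \<in> Tset 1 2 (2 * h + 1)"
proof -
  define N where "N = H * (1 + a) + a * a"
  obtain k where i: "i = 2 * k + 1"
    using \<open>odd i\<close> oddE by blast
  then have "i * s + z = k * (2 * N) + N"
    using eq by (simp add: N_def algebra_simps)
  then have "i * s = k * (2 * N) + x"
    using x by (simp add: N_def)
  moreover have "x < 2 * N"
    using x a_ge_9 by (simp add: N_def)
  ultimately have "(i * s) mod (3 ^ (2 * h + 1) - 1) = x" and "x < 3 ^ (2 * h + 1) - 1"
    unfolding three_pow_eq N_def[symmetric] by simp_all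
  then show ?thesis
    using x \<open>w3 x mod 4 = 1\<close> by (simp add: Tset_def)
qed

lemma H_ge_4: "H \<ge> 4"
  using a_ge_9 aH by simp

lemma a_ge_27: "odd h \<Longrightarrow> a \<ge> 27"
proof -
  assume "odd h"
  then have "h \<ge> 3"
    using h by presburger
  then show ?thesis
    using power_increasing[of 3 h "3::nat"] by (simp add: a)
qed

lemma run_odd_h_even_i:
  assumes "odd h" and "even i" "0 < i" "i \<le> H + 5"
  shows "(i * ((H - 1) * (1 + a) + a * a)) mod (3 ^ (2 * h + 1) - 1) \<in> Tset 1 2 (2 * h + 1)"
proof (rule mod_in_Tset_even[where z = "i * a + i"])
  obtain G where G: "H = Suc G"
    using H_ge_4 by (cases H) simp_all
  show "i * ((H - 1) * (1 + a) + a * a) + (i * a + i) = i * (H * (1 + a) + a * a)"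
    by (simp add: G algebra_simps)
  have "i * a + i \<le> (H + 5) * (1 + a)"
    using mult_le_mono1[OF assms(4), of "1 + a"] by (simp add: algebra_simps)
  moreover have "5 * (1 + a) < 2 * (a * a)"
    using mult_le_mono1[OF a_ge_9, of a] a_ge_9 unfolding distrib_left by linarith
  ultimately show "i * a + i < 3 ^ (2 * h + 1) - 1"
    unfolding three_pow_eq by (simp add: algebra_simps)
  have "i < a"
    using assms(4) aH a_ge_27[OF assms(1)] by simp
  then have "w3 (i * a + i) = 2 * w3 i"
    by (simp add: w3_mult_a_add)
  moreover have "even (w3 i)"
    using w3_mod_2[of i] assms(2) by (simp add: even_iff_mod_2_eq_zero)
  ultimately show "w3 (i * a + i) mod 4 = 0"
    by (auto elim!: evenE)
qed (use assms in simp_all)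

lemma run_odd_h_odd_i_le:
  assumes "odd h" and "odd i" "i \<le> H"
  shows "(i * ((H - 1) * (1 + a) + a * a)) mod (3 ^ (2 * h + 1) - 1) \<in> Tset 1 2 (2 * h + 1)"
proof (rule mod_in_Tset_odd[where z = "i * a + i" and x = "a * a + ((H - i) * a + (H - i))"])
  obtain G where G: "H = Suc G"
    using H_ge_4 by (cases H) simp_all
  show "i * ((H - 1) * (1 + a) + a * a) + (i * a + i) = i * (H * (1 + a) + a * a)"
    by (simp add: G algebra_simps)
  obtain d where d: "H = i + d"
    using assms(3) le_Suc_ex by blast
  then show "a * a + ((H - i) * a + (H - i)) + (i * a + i) = H * (1 + a) + a * a"
    by (simp add: algebra_simps)
  have "(H - i) * a + (H - i) < a * a"
    using d aH by (simp add: algebra_simps)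
  moreover have "H - i < a"
    using aH by simp
  ultimately have "w3 (a * a + ((H - i) * a + (H - i))) = 1 + 2 * w3 (H - i)"
    by (simp add: w3_a_sq_add w3_mult_a_add)
  moreover have "even (H - i)"
    using assms even_H_iff by simp
  then have "even (w3 (H - i))"
    using w3_mod_2[of "H - i"] by (simp add: even_iff_mod_2_eq_zero)
  ultimately show "w3 (a * a + ((H - i) * a + (H - i))) mod 4 = 1"
    by (auto elim!: evenE)
  show "0 < a * a + ((H - i) * a + (H - i))"
    using a_ge_9 by simp
qed (use assms in simp)

lemma run_odd_h_odd_i_gt:
  assumes "odd h" and "i = H + t" "t = 2 \<or> t = 4"
  shows "(i * ((H - 1) * (1 + a) + a * a)) mod (3 ^ (2 * h + 1) - 1) \<in> Tset 1 2 (2 * h + 1)"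
proof -
  define b where "b = a - 1 - t"
  have a_eq: "a = b + 1 + t" and b1: "b + 1 = a - 1 - (t - 1)"
    using a_ge_9 assms(3) by (auto simp: b_def)
  have w3_t: "w3 t = 2" "w3 (t - 1) = 1"
    using assms(3) w3_small by auto
  have "w3 (b * a + (b + 1)) = w3 b + w3 (b + 1)"
    using assms(3) a_eq by (intro w3_mult_a_add) auto
  also have "\<dots> = 4 * (h - 1) + 1"
  proof -
    have "t < a" "t - 1 < a"
      using a_eq by simp_all
    from w3_a_minus_1_minus[OF this(1)] w3_a_minus_1_minus[OF this(2)]
    have "w3 b + w3 t = 2 * h" "w3 (b + 1) + w3 (t - 1) = 2 * h"
      unfolding b_def[symmetric] b1[symmetric] .
    then show ?thesis
      using w3_t h by linarith
  qed
  finally have w3_x: "w3 (b * a + (b + 1)) mod 4 = 1"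
    by simp
  obtain G where G: "H = Suc G"
    using H_ge_4 by (cases H) simp_all
  show ?thesis
  proof (rule mod_in_Tset_odd[where z = "i * a + i" and x = "b * a + (b + 1)"])
    show "i * ((H - 1) * (1 + a) + a * a) + (i * a + i) = i * (H * (1 + a) + a * a)"
      by (simp add: G algebra_simps)
    show "b * a + (b + 1) + (i * a + i) = H * (1 + a) + a * a"
      unfolding assms(2) a_eq by (simp add: algebra_simps)
    show "odd i"
      using assms even_H_iff by auto
    show "w3 (b * a + (b + 1)) mod 4 = 1"
      by (rule w3_x)
  qed simp
qed

lemma run_odd_h:
  assumes "odd h" and "0 < i" "i \<le> H + 5"
  shows "(i * ((H - 1) * (1 + a) + a * a)) mod (3 ^ (2 * h + 1) - 1) \<in> Tset 1 2 (2 * h + 1)"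
proof (cases "even i")
  case True
  then show ?thesis
    using run_odd_h_even_i assms by blast
next
  case odd_i: False
  show ?thesis
  proof (cases "i \<le> H")
    case True
    then show ?thesis
      using run_odd_h_odd_i_le assms odd_i by blast
  next
    case False
    have "odd H"
      using assms(1) even_H_iff by simp
    then have "i = H + (i - H)" and "i - H = 2 \<or> i - H = 4"
      using False odd_i assms(3) by presburger+
    then show ?thesis
      using run_odd_h_odd_i_gt assms(1) by blast
  qed
qed

lemma run_even_h_eq: "i * (2 * H * H + a * a) + 2 * i * H = i * (H * (1 + a) + a * a)"
  by (simp add: aH algebra_simps)

lemma run_even_h_even_i_le:
  assumes "even h" and "even i" "0 < i" "i \<le> a"
  shows "(i * (2 * H * H + a * a)) mod (3 ^ (2 * h + 1) - 1) \<in> Tset 1 2 (2 * h + 1)"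
proof (rule mod_in_Tset_even[OF run_even_h_eq \<open>even i\<close>])
  obtain j where j: "i = j + 1"
    using assms(3) by (metis Suc_eq_plus1 gr0_implies_Suc)
  have j_less: "j < a"
    using assms(4) j by simp
  have "2 * i * H = j * a + (a - 1 - j)"
    using assms(4) unfolding j aH by (simp add: algebra_simps)
  then have "w3 (2 * i * H) = w3 j + w3 (a - 1 - j)"
    using j_less by (simp only: w3_mult_a_add diff_less_Suc diff_diff_left)
  then have "w3 (2 * i * H) = 2 * h"
    using w3_a_minus_1_minus[OF j_less] by linarith
  then show "w3 (2 * i * H) mod 4 = 0"
    using assms(1) by (auto elim!: evenE)
  show "0 < 2 * i * H"
    using assms(3) H_ge_4 by simp
  have "2 * i * H \<le> 2 * a * H"
    using assms(4) by simp
  also have "\<dots> < 3 ^ (2 * h + 1) - 1"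
    unfolding three_pow_eq using a_ge_9 by (simp add: algebra_simps)
  finally show "2 * i * H < 3 ^ (2 * h + 1) - 1" .
qed

lemma run_even_h_i_eq:
  assumes "even h" and "i = a + 1"
  shows "(i * (2 * H * H + a * a)) mod (3 ^ (2 * h + 1) - 1) \<in> Tset 1 2 (2 * h + 1)"
proof (rule mod_in_Tset_even[OF run_even_h_eq])
  have "2 * i * H = a * a - 1"
    unfolding assms(2) aH by (simp add: algebra_simps)
  then show "w3 (2 * i * H) mod 4 = 0"
    using w3_complement[of 0 "2 * h"] assms(1) by (auto simp: a_sq elim!: evenE)
  show "even i"
    using assms(2) aH by simp
  show "0 < 2 * i * H"
    using assms(2) H_ge_4 by simp
  show "2 * i * H < 3 ^ (2 * h + 1) - 1"
    unfolding three_pow_eq assms(2) aH by (simp add: algebra_simps)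
qed

lemma run_even_h_odd_i_le:
  assumes "even h" and "odd i" "i \<le> H"
  shows "(i * (2 * H * H + a * a)) mod (3 ^ (2 * h + 1) - 1) \<in> Tset 1 2 (2 * h + 1)"
proof (rule mod_in_Tset_odd[OF run_even_h_eq \<open>odd i\<close>, where x = "a * a + ((H - i) * a + (H + i))"])
  obtain d where d: "H = i + d"
    using assms(3) le_Suc_ex by blast
  show "a * a + ((H - i) * a + (H + i)) + 2 * i * H = H * (1 + a) + a * a"
    unfolding d aH by (simp add: algebra_simps)
  have Hi: "H + i = a - 1 - (H - i)" "H + i < a" and "H - i < a"
    using d aH by simp_all
  have "(H - i) * a + (H + i) < a * a"
    using d aH by (simp add: algebra_simps)
  then have "w3 (a * a + ((H - i) * a + (H + i))) = 1 + (w3 (H - i) + w3 (H + i))"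
    using Hi(2) by (simp only: w3_a_sq_add w3_mult_a_add)
  then have "w3 (a * a + ((H - i) * a + (H + i))) = 1 + 2 * h"
    using w3_a_minus_1_minus[OF \<open>H - i < a\<close>] unfolding Hi(1)[symmetric] by linarith
  then show "w3 (a * a + ((H - i) * a + (H + i))) mod 4 = 1"
    using assms(1) by (auto elim!: evenE)
qed (use a_ge_9 in simp)

lemma run_even_h_odd_i_gt:
  assumes "even h" and "i = H + 1 + t" "t = 0 \<or> t = 2 \<or> t = 4"
  shows "(i * (2 * H * H + a * a)) mod (3 ^ (2 * h + 1) - 1) \<in> Tset 1 2 (2 * h + 1)"
proof -
  define b where "b = a - t"
  have a_eq: "a = b + t" and "t < a"
    using a_ge_9 assms(3) by (auto simp: b_def)
  have w3_x: "w3 (b * a + t) mod 4 = 1"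
  proof (cases "t = 0")
    case True
    then show ?thesis
      using w3_a_sq_add[of 0] a_ge_9 by (simp add: b_def)
  next
    case False
    then have "w3 t = 2" "w3 (t - 1) = 1" and b: "b = a - 1 - (t - 1)"
      using assms(3) w3_small by (auto simp: b_def)
    moreover have "w3 (b * a + t) = w3 b + w3 t"
      using \<open>t < a\<close> by (rule w3_mult_a_add)
    moreover have "w3 b + w3 (t - 1) = 2 * h"
      unfolding b using \<open>t < a\<close> by (intro w3_a_minus_1_minus) simp
    ultimately have "w3 (b * a + t) = 2 * h + 1"
      by linarith
    then show ?thesis
      using assms(1) by (auto elim!: evenE)
  qed
  have odd_i: "odd i"
    using assms even_H_iff by auto
  have x_eq: "b * a + t + 2 * i * H = H * (1 + a) + a * a"
  proof -
    have "a * a = b * a + t * a"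
      using a_eq by (simp add: algebra_simps)
    moreover have "t + 2 * i * H = H * (1 + a) + t * a"
      unfolding assms(2) aH by (simp add: algebra_simps)
    ultimately show ?thesis
      by linarith
  qed
  have x_pos: "0 < b * a + t"
    using a_ge_9 \<open>t < a\<close> by (simp add: b_def)
  show ?thesis
    by (rule mod_in_Tset_odd[OF run_even_h_eq odd_i x_eq x_pos w3_x])
qed

lemma run_even_h:
  assumes "even h" and "0 < i" "i \<le> H + 6"
  shows "(i * (2 * H * H + a * a)) mod (3 ^ (2 * h + 1) - 1) \<in> Tset 1 2 (2 * h + 1)"
proof (cases "even i")
  case True
  show ?thesis
  proof (cases "i \<le> a")
    case True
    then show ?thesis
      using run_even_h_even_i_le assms \<open>even i\<close> by blast
  next
    case False
    then have "i = a + 1"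
      using assms(3) aH a_ge_9 \<open>even i\<close> by presburger
    then show ?thesis
      using run_even_h_i_eq assms(1) by blast
  qed
next
  case odd_i: False
  show ?thesis
  proof (cases "i \<le> H")
    case True
    then show ?thesis
      using run_even_h_odd_i_le assms odd_i by blast
  next
    case False
    have "even H"
      using assms(1) even_H_iff by simp
    then have "i = H + 1 + (i - H - 1)" and "i - H - 1 = 0 \<or> i - H - 1 = 2 \<or> i - H - 1 = 4"
      using False odd_i assms(3) by presburger+
    then show ?thesis
      using run_even_h_odd_i_gt assms(1) by blast
  qed
qed

lemma unit_odd_h: "odd h \<Longrightarrow>
  ((H - 1) * (1 + a) + a * a) * (3 * H) = 1 + (3 * (H div 2) + 1) * (3 ^ (2 * h + 1) - 1)"
proof -
  assume "odd h"
  then obtain r where "H = 2 * r + 1"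
    using even_H_iff oddE by blast
  then show ?thesis
    unfolding three_pow_eq aH by (simp add: algebra_simps)
qed

lemma unit_even_h: "even h \<Longrightarrow>
  (2 * H * H + a * a) * (3 * (H + 1)) = 1 + (3 * (H div 2) + 1) * (3 ^ (2 * h + 1) - 1)"
proof -
  assume "even h"
  then obtain r where "H = 2 * r"
    using even_H_iff by blast
  then show ?thesis
    unfolding three_pow_eq aH by (simp add: algebra_simps)
qed

end

section \<open>The code\<close>

context
  fixes \<alpha> :: "'a::{field,finite}" and m :: nat
  assumes card: "card (UNIV :: 'a set) = 3 ^ m" and prim: "primitive_elem \<alpha>"
begin

lemma exponent_pos: "m > 0"
  using card_UNIV_field_minus_1_pos[where 'a = 'a] card by (cases m) simp_all

lemma CHAR_eq: "CHAR('a) = 3"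
  using CHAR_eq_3[OF card exponent_pos] .

lemma alpha_power_eq_iff: "\<alpha> ^ a = \<alpha> ^ b \<longleftrightarrow> a mod (3 ^ m - 1) = b mod (3 ^ m - 1)"
  using primitive_elem_power_eq_iff[OF prim] card by simp

lemma cube_coeffs_gpoly: "cube_coeffs (gpoly \<alpha> i1 i2 m) = gpoly \<alpha> i1 i2 m"
proof -
  let ?T = "Tset i1 i2 m" and ?\<sigma> = "\<lambda>j. (3 * j) mod (3 ^ m - 1)"
  have inj: "inj_on ?\<sigma> ?T"
    by (rule inj_on_subset[OF inj_on_mult_3_mod[OF exponent_pos]]) (auto simp: Tset_def)
  have "(\<alpha> ^ j) ^ 3 = \<alpha> ^ (3 * j)" for j
    by (simp add: power_mult[symmetric] mult.commute)
  then have "cube_coeffs (gpoly \<alpha> i1 i2 m) = (\<Prod>j\<in>?T. [:- (\<alpha> ^ (3 * j)), 1:])"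
    by (simp add: gpoly_def cube_coeffs_prod[OF CHAR_eq] cube_coeffs_linear)
  also have "\<dots> = (\<Prod>j\<in>?T. [:- (\<alpha> ^ ?\<sigma> j), 1:])"
    by (intro prod.cong refl) (simp add: alpha_power_eq_iff)
  also have "\<dots> = (\<Prod>j\<in>?\<sigma> ` ?T. [:- (\<alpha> ^ j), 1:])"
    by (subst prod.reindex[OF inj]) (simp add: o_def)
  also have "\<dots> = gpoly \<alpha> i1 i2 m"
    by (simp only: image_mult_3_mod_Tset[OF exponent_pos] gpoly_def)
  finally show ?thesis .
qed

lemma coeffs_gpoly_mult_in_prime_subfield_iff:
  "(\<forall>i. coeff (gpoly \<alpha> i1 i2 m * q) i \<in> prime_subfield) \<longleftrightarrow> (\<forall>i. coeff q i \<in> prime_subfield)"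
proof -
  have "cube_coeffs (gpoly \<alpha> i1 i2 m * q) = gpoly \<alpha> i1 i2 m * cube_coeffs q"
    using cube_coeffs_mult[OF CHAR_eq, of "gpoly \<alpha> i1 i2 m" q] by (simp add: cube_coeffs_gpoly)
  then have "cube_coeffs (gpoly \<alpha> i1 i2 m * q) = gpoly \<alpha> i1 i2 m * q \<longleftrightarrow> cube_coeffs q = q"
    by (simp add: gpoly_nonzero)
  then show ?thesis
    by (simp add: cube_coeffs_eq_self_iff[OF CHAR_eq])
qed

lemma degree_gpoly_mult_less_iff:
  "degree (gpoly \<alpha> i1 i2 m * q) < 3 ^ m - 1 \<longleftrightarrow> degree q < (3 ^ m - 1) - card (Tset i1 i2 m)"
  using card_Tset_less[OF exponent_pos, of i1 i2]
  by (cases "q = 0") (auto simp: degree_mult_eq gpoly_nonzero degree_gpoly)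

lemma tcode_eq_image:
  "tcode \<alpha> i1 i2 m = (\<lambda>q. gpoly \<alpha> i1 i2 m * q) `
     {q. (\<forall>i. coeff q i \<in> prime_subfield) \<and> degree q < (3 ^ m - 1) - card (Tset i1 i2 m)}"
  (is "_ = ?mult ` ?Q")
proof (intro subset_antisym subsetI)
  fix c
  assume "c \<in> tcode \<alpha> i1 i2 m"
  then obtain q where c: "c = gpoly \<alpha> i1 i2 m * q"
    and "\<forall>i. coeff c i \<in> prime_subfield" and "degree c < 3 ^ m - 1"
    by (auto simp: tcode_def)
  then have "q \<in> ?Q"
    using coeffs_gpoly_mult_in_prime_subfield_iff degree_gpoly_mult_less_iff by blast
  with c show "c \<in> ?mult ` ?Q"
    by blast
next
  fix c
  assume "c \<in> ?mult ` ?Q"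
  then obtain q where "q \<in> ?Q" and c: "c = gpoly \<alpha> i1 i2 m * q"
    by blast
  then have "\<forall>i. coeff c i \<in> prime_subfield" and "degree c < 3 ^ m - 1"
    using coeffs_gpoly_mult_in_prime_subfield_iff degree_gpoly_mult_less_iff by blast+
  with c show "c \<in> tcode \<alpha> i1 i2 m"
    by (simp add: tcode_def)
qed

lemma card_tcode: "card (tcode \<alpha> i1 i2 m) = 3 ^ ((3 ^ m - 1) - card (Tset i1 i2 m))"
proof -
  have "inj_on (\<lambda>q. gpoly \<alpha> i1 i2 m * q) Q" for Q
    by (rule inj_onI) (simp add: gpoly_nonzero)
  moreover have "finite (prime_subfield :: 'a set)"
    by (simp add: prime_subfield_eq[OF CHAR_eq])
  moreover have "(0::'a) \<in> prime_subfield"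
    by (simp add: prime_subfield_eq[OF CHAR_eq])
  moreover have "(3 ^ m - 1) - card (Tset i1 i2 m) > 0"
    using card_Tset_less[OF exponent_pos, of i1 i2] by simp
  ultimately show ?thesis
    by (simp add: tcode_eq_image card_image card_polys_degree_less card_prime_subfield[OF CHAR_eq])
qed

lemma dim3_tcode: "dim3 (tcode \<alpha> i1 i2 m) = (3 ^ m - 1) - card (Tset i1 i2 m)"
  unfolding dim3_def card_tcode by (rule the_equality) simp_all

lemma gpoly_in_tcode: "gpoly \<alpha> i1 i2 m \<in> tcode \<alpha> i1 i2 m"
  using cube_coeffs_gpoly cube_coeffs_eq_self_iff[OF CHAR_eq] card_Tset_less[OF exponent_pos]
  by (simp add: tcode_def degree_gpoly)

lemma finite_tcode: "finite (tcode \<alpha> i1 i2 m)"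
  using card_tcode[of i1 i2] by (auto intro: card_ge_0_finite)

text \<open>The hypothesis \<open>s v = 1 + k n\<close> makes \<open>s\<close> a unit modulo \<open>n\<close>, so \<open>\<alpha> ^ s\<close> is again
  an element of order \<open>n\<close>.\<close>

lemma less_min_dist_tcode:
  fixes s v k L :: nat
  assumes unit: "s * v = 1 + k * (3 ^ m - 1)"
    and run: "\<And>i. 1 \<le> i \<Longrightarrow> i \<le> L \<Longrightarrow> (i * s) mod (3 ^ m - 1) \<in> Tset i1 i2 m"
  shows "L < min_dist (tcode \<alpha> i1 i2 m)"
proof (rule less_min_dist[OF finite_tcode gpoly_in_tcode gpoly_nonzero])
  fix c
  assume c: "c \<in> tcode \<alpha> i1 i2 m" "c \<noteq> 0"
  have inj: "inj_on (\<lambda>j. (\<alpha> ^ s) ^ j) {..<3 ^ m - 1}"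
  proof (rule inj_onI)
    fix x y
    assume "x \<in> {..<3 ^ m - 1}" "y \<in> {..<3 ^ m - 1}" and "(\<alpha> ^ s) ^ x = (\<alpha> ^ s) ^ y"
    moreover from this(3) have "(s * x) mod (3 ^ m - 1) = (s * y) mod (3 ^ m - 1)"
      by (simp only: power_mult[symmetric] alpha_power_eq_iff)
    ultimately show "x = y"
      using inj_onD[OF inj_on_mult_mod[OF unit]] by blast
  qed
  have roots: "poly c ((\<alpha> ^ s) ^ i) = 0" if "1 \<le> i" "i \<le> L" for i
  proof -
    have "(\<alpha> ^ s) ^ i = \<alpha> ^ ((i * s) mod (3 ^ m - 1))"
      by (simp only: power_mult[symmetric] alpha_power_eq_iff mult.commute mod_mod_trivial)
    then have "poly (gpoly \<alpha> i1 i2 m) ((\<alpha> ^ s) ^ i) = 0"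
      using poly_gpoly_eq_0[OF run[OF that]] by simp
    then show ?thesis
      using c(1) by (auto simp: tcode_def)
  qed
  have "\<alpha> ^ s \<noteq> 0"
    using prim by (simp add: primitive_elem_def)
  moreover have "degree c < 3 ^ m - 1"
    using c(1) by (simp add: tcode_def)
  ultimately show "L < hweight c"
    using bch_bound[OF inj _ _ c(2) roots] by blast
qed

lemma dim3_tcode_1_2:
  assumes "odd m"
  shows "dim3 (tcode \<alpha> 1 2 m) = (if m mod 4 = 1 then (3 ^ m - 1) div 2 else (3 ^ m + 1) div 2)"
  using card_Tset_1_2[OF assms] by (simp add: dim3_tcode split: if_splits)

lemma less_min_dist_tcode_1_2_even:
  assumes m: "m = 2 * h + 1" and h: "h \<ge> 2" "even h" and H: "3 ^ h = 2 * H + 1"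
  shows "H + 6 < min_dist (tcode \<alpha> 1 2 m)"
proof (rule less_min_dist_tcode)
  show "(2 * H * H + 3 ^ h * 3 ^ h) * (3 * (H + 1)) = 1 + (3 * (H div 2) + 1) * (3 ^ m - 1)"
    using unit_even_h[OF refl H h] unfolding m .
  show "(i * (2 * H * H + 3 ^ h * 3 ^ h)) mod (3 ^ m - 1) \<in> Tset 1 2 m"
    if "1 \<le> i" "i \<le> H + 6" for i
    using run_even_h[OF refl H h] that unfolding m by simp
qed

lemma less_min_dist_tcode_1_2_odd:
  assumes m: "m = 2 * h + 1" and h: "h \<ge> 2" "odd h" and H: "3 ^ h = 2 * H + 1"
  shows "H + 5 < min_dist (tcode \<alpha> 1 2 m)"
proof (rule less_min_dist_tcode)
  show "((H - 1) * (1 + 3 ^ h) + 3 ^ h * 3 ^ h) * (3 * H) = 1 + (3 * (H div 2) + 1) * (3 ^ m - 1)"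
    using unit_odd_h[OF refl H h] unfolding m .
  show "(i * ((H - 1) * (1 + 3 ^ h) + 3 ^ h * 3 ^ h)) mod (3 ^ m - 1) \<in> Tset 1 2 m"
    if "1 \<le> i" "i \<le> H + 5" for i
    using run_odd_h[OF refl H h] that unfolding m by simp
qed

end

theorem theorem4:
  fixes \<alpha> :: "'a::{field,finite}" and m :: nat
  assumes card: "card (UNIV :: 'a set) = 3 ^ m"
    and prim: "primitive_elem \<alpha>"
    and odd: "odd m" and m5: "m \<ge> 5"
  shows "(m mod 4 = 1 \<longrightarrow>
            real (min_dist (tcode \<alpha> 1 2 m)) \<ge> (3 ^ ((m - 1) div 2) + 13) / 2
          \<and> dim3 (tcode \<alpha> 1 2 m) = (3 ^ m - 1) div 2)
       \<and> (m mod 4 = 3 \<longrightarrow>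
            real (min_dist (tcode \<alpha> 1 2 m)) \<ge> (3 ^ ((m - 1) div 2) + 11) / 2
          \<and> dim3 (tcode \<alpha> 1 2 m) = ((3 ^ m - 1) + 2) div 2)"
proof -
  define h where "h = (m - 1) div 2"
  have m: "m = 2 * h + 1" and h: "h \<ge> 2"
    using odd m5 by (auto simp: h_def elim!: oddE)
  have "odd (3 ^ h :: nat)"
    by simp
  then obtain H where H: "3 ^ h = 2 * H + (1::nat)"
    by (rule oddE)
  have pow: "(3::real) ^ ((m - 1) div 2) = 2 * real H + 1"
    using arg_cong[OF H, of real] by (simp add: h_def)
  have "m mod 4 = 1 \<longleftrightarrow> even h"
    unfolding m by presburger
  then show ?thesis
    using less_min_dist_tcode_1_2_even[OF card prim m h _ H] less_min_dist_tcode_1_2_odd[OF card prim m h _ H]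
      dim3_tcode_1_2[OF card prim odd] pow
    by (auto simp: m)
qed

end
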